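(* Let $D\subset\mathbb N^n$ be finite, not contained in any coordinate hyperplane, $p$ a prime, $m\ge1$ an integer and $\varphi:\mathbb Z/m\mathbb Z\to\Sigma_p(D)$ a map. Let $M_{D,p}(\varphi)$ be the set of minimal elements $U\in E_{D,p}(m)$ with $\varphi_U=\varphi$. Then (i) $M_{D,p}(\varphi)$ is empty if and only if at least one of the sets $V(\varphi(-i-1),\varphi(-i))$, $0\le i\le m-1$, is empty; (ii) otherwise the map $$B_\varphi:M_{D,p}(\varphi)\to\prod_{i=0}^{m-1}V(\varphi(-i-1),\varphi(-i))$$ sending $(u_{\mathbf d})_{\mathbf d\in D}$ to its base-$p$ digits $((u_{\mathbf d,i})_{\mathbf d\in D})_{0\le i\le m-1}$ (where $u_{\mathbf d}=\sum_{i=0}^{m-1}u_{\mathbf d,i}p^i$, $0\le u_{\mathbf d,i}\le p-1$) is a well-defined one-to-one correspondence.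
   Context: $s_p$ = base-$p$ digit sum. $E_{D,p}(r)$ = set of $U=(u_{\mathbf d})_{\mathbf d\in D}\in\{0,\dots,p^r-1\}^D$ with $\sum u_{\mathbf d}\mathbf d\equiv0\pmod{p^r-1}$ coordinatewise and all coordinates of $\sum u_{\mathbf d}\mathbf d$ positive ($U$ has length $r$); $s_p(U)=\sum s_p(u_{\mathbf d})$; $\delta_p(D)=\frac1{p-1}\min_{r\ge1}\min_{U\in E_{D,p}(r)}s_p(U)/r$ (the minimum exists); $U\in E_{D,p}(r)$ is minimal if $s_p(U)=(p-1)r\delta_p(D)$. Shift $\delta_r$ on $\{0,\dots,p^r-1\}$: $k\mapsto pk\bmod(p^r-1)$ for $k\le p^r-2$, $p^r-1\mapsto p^r-1$, applied coordinatewise. Support of $U\in E_{D,p}(r)$: $\varphi_U:\mathbb Z/r\mathbb Z\to\mathbb N_{>0}^n$, $\varphi_U(k)=\frac1{p^r-1}\sum_{\mathbf d}\mathbf d(\delta_r^kU)_{\mathbf d}$. $U$ is irreducible if $\varphi_U$ is injective; $MI_{D,p}$ = set of minimal irreducible elements of all lengths; $\Sigma_p(D)=\bigcup_{U\in MI_{D,p}}\mathrm{Im}\varphi_U$. $\psi(U)=(u_{\mathbf d}\bmod p)_{\mathbf d}\in\{0,\dots,p-1\}^D$; for $\mathbf e,\mathbf e'\in\Sigma_p(D)$, $V(\mathbf e,\mathbf e')=\{\psi(U):U\in MI_{D,p},\varphi_U(-1)=\mathbf e,\varphi_U(0)=\mathbf e'\}$. *)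

theory Defs
  imports "HOL-Analysis.Analysis" "HOL-Library.FuncSet"
begin

text \<open>Vectors in N^n are elements of nat^'n (n = CARD('n) >= 1).
  An element U = (u_d)_{d in D} is an extensional function on D.\<close>

function digsum :: "nat \<Rightarrow> nat \<Rightarrow> nat" where
  "digsum p k = (if p \<le> 1 \<or> k = 0 then k else k mod p + digsum p (k div p))"
  by auto
termination
  by (relation "Wellfounded.measure (\<lambda>(p,k). k)") auto

definition sU :: "nat \<Rightarrow> (nat^'n) set \<Rightarrow> (nat^'n \<Rightarrow> nat) \<Rightarrow> nat" where
  "sU p D U = (\<Sum>d\<in>D. digsum p (U d))"

definition wsum :: "(nat^'n) set \<Rightarrow> (nat^'n \<Rightarrow> nat) \<Rightarrow> nat^'n" where
  "wsum D U = (\<chi> j. \<Sum>d\<in>D. U d * d $ j)"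

definition E :: "(nat^'n) set \<Rightarrow> nat \<Rightarrow> nat \<Rightarrow> (nat^'n \<Rightarrow> nat) set" where
  "E D p r = {U \<in> D \<rightarrow>\<^sub>E {0..p^r - 1}.
      (\<forall>j. wsum D U $ j mod (p^r - 1) = 0) \<and> (\<forall>j. 0 < wsum D U $ j)}"

definition delta :: "(nat^'n) set \<Rightarrow> nat \<Rightarrow> real" where
  "delta D p = (1 / (real p - 1)) *
     Inf {real (sU p D U) / real r | r U. r \<ge> 1 \<and> U \<in> E D p r}"

definition minimal :: "(nat^'n) set \<Rightarrow> nat \<Rightarrow> nat \<Rightarrow> (nat^'n \<Rightarrow> nat) \<Rightarrow> bool" where
  "minimal D p r U \<longleftrightarrow> U \<in> E D p r \<and>
     real (sU p D U) = (real p - 1) * real r * delta D p"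

definition shift :: "nat \<Rightarrow> nat \<Rightarrow> nat \<Rightarrow> nat" where
  "shift p r k = (if k \<le> p^r - 2 then (p * k) mod (p^r - 1) else p^r - 1)"

text \<open>support phi_U : Z/rZ -> N^n, represented as an r-periodic function on int\<close>
definition supp :: "(nat^'n) set \<Rightarrow> nat \<Rightarrow> nat \<Rightarrow> (nat^'n \<Rightarrow> nat) \<Rightarrow> int \<Rightarrow> nat^'n" where
  "supp D p r U k = (\<chi> j. (\<Sum>d\<in>D. d $ j * (shift p r ^^ nat (k mod int r)) (U d)) div (p^r - 1))"

definition irreducible_el :: "(nat^'n) set \<Rightarrow> nat \<Rightarrow> nat \<Rightarrow> (nat^'n \<Rightarrow> nat) \<Rightarrow> bool" where
  "irreducible_el D p r U \<longleftrightarrow> inj_on (supp D p r U) {0..<int r}"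

definition MI :: "(nat^'n) set \<Rightarrow> nat \<Rightarrow> (nat \<times> (nat^'n \<Rightarrow> nat)) set" where
  "MI D p = {(r, U). r \<ge> 1 \<and> U \<in> E D p r \<and> minimal D p r U \<and> irreducible_el D p r U}"

definition Sigma_p :: "(nat^'n) set \<Rightarrow> nat \<Rightarrow> (nat^'n) set" where
  "Sigma_p D p = (\<Union>(r, U)\<in>MI D p. range (supp D p r U))"

definition psi :: "(nat^'n) set \<Rightarrow> nat \<Rightarrow> (nat^'n \<Rightarrow> nat) \<Rightarrow> (nat^'n \<Rightarrow> nat)" where
  "psi D p U = (\<lambda>d\<in>D. U d mod p)"

definition V :: "(nat^'n) set \<Rightarrow> nat \<Rightarrow> nat^'n \<Rightarrow> nat^'n \<Rightarrow> (nat^'n \<Rightarrow> nat) set" where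
  "V D p e e' = {psi D p U | r U. (r, U) \<in> MI D p \<and> supp D p r U (-1) = e \<and> supp D p r U 0 = e'}"

definition Mset :: "(nat^'n) set \<Rightarrow> nat \<Rightarrow> nat \<Rightarrow> (int \<Rightarrow> nat^'n) \<Rightarrow> (nat^'n \<Rightarrow> nat) set" where
  "Mset D p m \<phi> = {U \<in> E D p m. minimal D p m U \<and> supp D p m U = \<phi>}"

definition Bmap :: "(nat^'n) set \<Rightarrow> nat \<Rightarrow> nat \<Rightarrow> (nat^'n \<Rightarrow> nat) \<Rightarrow> nat \<Rightarrow> (nat^'n \<Rightarrow> nat)" where
  "Bmap D p m U = (\<lambda>i\<in>{..<m}. \<lambda>d\<in>D. U d div p ^ i mod p)"

end

theory Submission
  imports Defs
begin

text \<open>Elements U of E_{D,p}(r) are the closed walks of length r in a graph on positive vectors: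
  an edge from a to b carries a vector w of base-p digits with p b = a + \<Sum>_d w_d d, the digits of U
  label the edges of its walk, the values of the support \<phi>_U are its vertices, and s_p(U) is the
  total weight of the labels. Thus U is minimal exactly when its walk has the least possible mean
  weight. A closed walk of minimal mean weight stays minimal when a closed subwalk is cut out, so
  every edge of it lies on a simple cycle of minimal mean weight, i.e. on the walk of a minimal
  irreducible element; its label therefore lies in the corresponding set V. Conversely, if every
  edge of a closed walk lies on a minimal cycle, the remainders of these cycles close up to a walk
  of mean weight at least minimal, and comparing weights shows that the walk itself is minimal.
  Hence the digits of a minimal U with support \<phi> range exactly over the product of the sets
  V(\<phi>(-i-1), \<phi>(-i)), and the digit map is injective by uniqueness of base-p expansions.\<close>

declare digsum.simps[simp del]

section \<open>Base-p expansions\<close>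

lemma power_ge_two:
  assumes "2 \<le> p" and "1 \<le> r"
  shows "2 \<le> (p::nat) ^ r"
proof -
  have "p ^ 1 \<le> p ^ r" using assms by (intro power_increasing) auto
  then show ?thesis using assms by simp
qed

lemma sum_digits_Suc:
  "(\<Sum>i<Suc r. c i * (p::nat) ^ i) = c 0 + p * (\<Sum>i<r. c (Suc i) * p ^ i)"
  unfolding sum.lessThan_Suc_shift by (simp add: sum_distrib_left mult_ac)

lemma sum_digits_less_power:
  assumes "\<forall>i<r. c i < (p::nat)"
  shows "(\<Sum>i<r. c i * p ^ i) < p ^ r"
  using assms
proof (induction r arbitrary: c)
  case 0
  then show ?case by simp
next
  case (Suc r)
  have tail: "(\<Sum>i<r. c (Suc i) * p ^ i) < p ^ r" using Suc by auto
  have "c 0 + p * (\<Sum>i<r. c (Suc i) * p ^ i) < p + p * (\<Sum>i<r. c (Suc i) * p ^ i)"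
    using Suc.prems by simp
  also have "\<dots> = p * ((\<Sum>i<r. c (Suc i) * p ^ i) + 1)" by (simp add: algebra_simps)
  also have "\<dots> \<le> p * p ^ r" using tail by (intro mult_left_mono) auto
  finally show ?case by (simp only: sum_digits_Suc power_Suc)
qed

lemma sum_digits_nth_digit:
  assumes "\<forall>i<r. c i < (p::nat)" and "i < r"
  shows "(\<Sum>j<r. c j * p ^ j) div p ^ i mod p = c i"
  using assms
proof (induction r arbitrary: c i)
  case 0
  then show ?case by simp
next
  case (Suc r)
  have c0: "c 0 < p" using Suc.prems by auto
  show ?case
  proof (cases i)
    case 0
    then show ?thesis using c0 by (simp only: sum_digits_Suc) simp
  next
    case (Suc i')
    have "(\<Sum>j<Suc r. c j * p ^ j) div p ^ Suc i'
        = (c 0 + p * (\<Sum>j<r. c (Suc j) * p ^ j)) div p div p ^ i'"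
      by (simp only: sum_digits_Suc div_mult2_eq power_Suc)
    also have "\<dots> = (\<Sum>j<r. c (Suc j) * p ^ j) div p ^ i'" using c0 by simp
    finally show ?thesis using Suc.IH[of "\<lambda>j. c (Suc j)" i'] Suc.prems \<open>i = Suc i'\<close> by simp
  qed
qed

lemma sum_nth_digits:
  assumes "x < (p::nat) ^ r" and "0 < p"
  shows "(\<Sum>i<r. (x div p ^ i mod p) * p ^ i) = x"
  using assms
proof (induction r arbitrary: x)
  case 0
  then show ?case by simp
next
  case (Suc r)
  have "x div p < p ^ r" using Suc.prems by (simp add: less_mult_imp_div_less mult.commute)
  then have tail: "(\<Sum>i<r. (x div p div p ^ i mod p) * p ^ i) = x div p" using Suc by auto
  have "(\<Sum>i<Suc r. (x div p ^ i mod p) * p ^ i)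
      = x mod p + p * (\<Sum>i<r. (x div p ^ Suc i mod p) * p ^ i)"
    by (subst sum_digits_Suc) simp
  also have "\<dots> = x mod p + p * (x div p)" using tail by (simp add: div_mult2_eq)
  finally show ?case by simp
qed

lemma nth_digits_eq_imp_eq:
  assumes "x < (p::nat) ^ r" and "y < p ^ r" and "0 < p"
    and "\<And>i. i < r \<Longrightarrow> x div p ^ i mod p = y div p ^ i mod p"
  shows "x = y"
proof -
  have "x = (\<Sum>i<r. (x div p ^ i mod p) * p ^ i)" using sum_nth_digits[OF assms(1,3)] by (rule sym)
  also have "\<dots> = (\<Sum>i<r. (y div p ^ i mod p) * p ^ i)" using assms(4) by simp
  also have "\<dots> = y" using assms(2,3) by (rule sum_nth_digits)
  finally show ?thesis .
qed

lemma digsum_0 [simp]: "digsum p 0 = 0"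
  by (subst digsum.simps) simp

lemma digsum_add_digit:
  assumes "1 < p" and "c < p"
  shows "digsum p (c + p * y) = c + digsum p y"
proof (cases "c + p * y = 0")
  case False
  then show ?thesis using assms by (subst digsum.simps) simp
qed (use assms in simp)

lemma digsum_sum_digits:
  assumes "1 < p" and "\<forall>i<r. c i < p"
  shows "digsum p (\<Sum>i<r. c i * p ^ i) = (\<Sum>i<r. c i)"
  using assms(2)
proof (induction r arbitrary: c)
  case 0
  then show ?case by simp
next
  case (Suc r)
  have "digsum p (\<Sum>i<Suc r. c i * p ^ i) = digsum p (c 0 + p * (\<Sum>i<r. c (Suc i) * p ^ i))"
    by (simp only: sum_digits_Suc)
  also have "\<dots> = c 0 + (\<Sum>i<r. c (Suc i))" using Suc assms(1) by (simp add: digsum_add_digit)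
  finally show ?case by (simp only: sum.lessThan_Suc_shift)
qed

section \<open>Cyclic rotation of digits\<close>

text \<open>Multiplication by p modulo p^r - 1 rotates the r base-p digits of a number cyclically,
  the digit t leaving at the top reappearing at the bottom.\<close>

lemma shift_eqI:
  assumes p: "2 \<le> p" and r: "1 \<le> r" and x: "x \<le> p ^ r - 1" and y: "y \<le> p ^ r - 1"
    and t: "t < p" and eq: "p * x + t = y + p ^ r * t"
  shows "shift p r x = y"
proof -
  have pr: "2 \<le> p ^ r" using p r by (rule power_ge_two)
  have eq': "p * x = y + (p ^ r - 1) * t" using eq pr by (simp add: algebra_simps diff_mult_distrib)
  show ?thesis
  proof (cases "x \<le> p ^ r - 2")
    case True
    have "y \<noteq> p ^ r - 1"
    proof
      obtain q where q: "p ^ r = Suc q" using pr by (cases "p ^ r") auto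
      assume "y = p ^ r - 1"
      then have px: "p * x = q * (t + 1)" using eq' q by simp
      then have "p * x + (t + 1) = p ^ r * (t + 1)" using q by simp
      moreover have "p dvd p ^ r * (t + 1)" using r by (simp add: dvd_power)
      ultimately have "p dvd t + 1" by (metis dvd_add_right_iff dvd_triv_left)
      then have "t + 1 = p" using t by (auto dest: dvd_imp_le)
      then have "x = p ^ r - 1" using px p q by (simp add: mult.commute)
      then show False using True pr by simp
    qed
    then have "(p * x) mod (p ^ r - 1) = y" using eq' y by simp
    then show ?thesis using True by (simp add: shift_def)
  next
    case False
    then have x_top: "x = p ^ r - 1" using x by simp
    have "(p ^ r - 1) * (p - t) + (p ^ r - 1) * t = (p ^ r - 1) * p"
      using t by (simp add: add_mult_distrib2[symmetric])
    then have "y = (p ^ r - 1) * (p - t)" using eq' x_top by (simp add: mult.commute)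
    moreover have "1 \<le> p - t" using t by simp
    ultimately have "p ^ r - 1 \<le> y" by (metis mult_le_mono2 mult_1_right)
    then show ?thesis using y False by (simp add: shift_def)
  qed
qed

definition window_num :: "nat \<Rightarrow> nat \<Rightarrow> (nat \<Rightarrow> nat) \<Rightarrow> nat \<Rightarrow> nat" where
  "window_num p r c s = (\<Sum>j<r. c (s + j) * p ^ j)"

lemma window_num_periodic:
  assumes "\<forall>i. c (i + r) = c i"
  shows "window_num p r c (s + r) = window_num p r c s"
proof -
  have "c (s + r + j) = c (s + j)" for j using assms[rule_format, of "s + j"] by (simp add: add_ac)
  then show ?thesis by (simp add: window_num_def)
qed

lemma window_num_Suc:
  assumes "\<forall>i. c (i + r) = c i"
  shows "p * window_num p r c (Suc s) + c s = window_num p r c s + p ^ r * c s"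
proof -
  have "(\<Sum>j<Suc r. c (s + j) * p ^ j) = c s + p * window_num p r c (Suc s)"
    unfolding sum_digits_Suc window_num_def by simp
  moreover have "(\<Sum>j<Suc r. c (s + j) * p ^ j) = window_num p r c s + c s * p ^ r"
    using assms[rule_format, of s] by (simp add: window_num_def add.commute)
  ultimately show ?thesis by (simp add: mult.commute)
qed

lemma window_num_nth_digits:
  assumes "x < p ^ r" and "0 < p"
  shows "window_num p r (\<lambda>i. x div p ^ (i mod r) mod p) 0 = x"
  using sum_nth_digits[OF assms] by (simp add: window_num_def)

lemma sum_window_num_Suc:
  fixes w :: "nat \<Rightarrow> nat ^ 'n \<Rightarrow> nat"
  assumes per: "\<forall>i d. w (i + r) d = w i d" and p: "0 < p"
  shows "p * (\<Sum>d\<in>D. d $ j * window_num p r (\<lambda>i. w i d) (Suc s))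
    = (\<Sum>d\<in>D. d $ j * window_num p r (\<lambda>i. w i d) s) + (p ^ r - 1) * (\<Sum>d\<in>D. d $ j * w s d)"
proof -
  have step: "p * window_num p r (\<lambda>i. w i d) (Suc s)
      = window_num p r (\<lambda>i. w i d) s + (p ^ r - 1) * w s d" for d
    using window_num_Suc[of "\<lambda>i. w i d" r p s] per p by (simp add: diff_mult_distrib)
  have "p * (\<Sum>d\<in>D. d $ j * window_num p r (\<lambda>i. w i d) (Suc s))
      = (\<Sum>d\<in>D. d $ j * (p * window_num p r (\<lambda>i. w i d) (Suc s)))"
    by (simp add: sum_distrib_left mult_ac)
  also have "\<dots> = (\<Sum>d\<in>D. d $ j * window_num p r (\<lambda>i. w i d) s + (p ^ r - 1) * (d $ j * w s d))"
    by (simp only: step distrib_left mult_ac)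
  finally show ?thesis by (simp add: sum.distrib sum_distrib_left)
qed

lemma window_num_less:
  assumes "\<forall>i. c i < p"
  shows "window_num p r c s < p ^ r"
  unfolding window_num_def by (rule sum_digits_less_power) (use assms in auto)

lemma shift_window_num:
  assumes per: "\<forall>i. c (i + r) = c i" and digits: "\<forall>i. c i < p" and p: "2 \<le> p" and r: "1 \<le> r"
  shows "shift p r (window_num p r c s) = window_num p r c (s + (r - 1))"
proof -
  have bound: "window_num p r c s' \<le> p ^ r - 1" for s'
    using window_num_less[OF digits, of r s'] by simp
  have "Suc (s + (r - 1)) = s + r" using r by simp
  then have "p * window_num p r c s + c (s + (r - 1))
      = window_num p r c (s + (r - 1)) + p ^ r * c (s + (r - 1))"
    using window_num_Suc[OF per, of p "s + (r - 1)"] window_num_periodic[OF per, of p s] by simp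
  then show ?thesis using bound digits by (intro shift_eqI[OF p r]) auto
qed

lemma funpow_shift_window_num:
  assumes "\<forall>i. c (i + r) = c i" and "\<forall>i. c i < p" and "2 \<le> p" and "1 \<le> r"
  shows "(shift p r ^^ n) (window_num p r c s) = window_num p r c (s + n * (r - 1))"
  by (induction n) (simp_all add: shift_window_num[OF assms] add_ac)

lemma sum_window_num_eq:
  fixes a :: "nat \<Rightarrow> nat ^ 'n" and w :: "nat \<Rightarrow> nat ^ 'n \<Rightarrow> nat"
  assumes chain: "\<And>i. p * a (Suc i) $ j = a i $ j + (\<Sum>d\<in>D. w i d * d $ j)"
    and per: "a (s + r) = a s"
  shows "(\<Sum>d\<in>D. d $ j * window_num p r (\<lambda>i. w i d) s) = (p ^ r - 1) * a s $ j"
proof -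
  have telescope: "p ^ k * a (s + k) $ j = a s $ j + (\<Sum>i<k. p ^ i * (\<Sum>d\<in>D. w (s + i) d * d $ j))"
    for k
  proof (induction k)
    case (Suc k)
    have "p ^ Suc k * a (s + Suc k) $ j = p ^ k * (a (s + k) $ j + (\<Sum>d\<in>D. w (s + k) d * d $ j))"
      using chain[of "s + k"] by simp
    then show ?case using Suc by (simp add: algebra_simps)
  qed simp
  have "(\<Sum>d\<in>D. d $ j * window_num p r (\<lambda>i. w i d) s)
      = (\<Sum>d\<in>D. \<Sum>i<r. p ^ i * (w (s + i) d * d $ j))"
    unfolding window_num_def by (simp add: sum_distrib_left mult_ac)
  also have "\<dots> = (\<Sum>i<r. p ^ i * (\<Sum>d\<in>D. w (s + i) d * d $ j))"
    by (subst sum.swap) (simp add: sum_distrib_left)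
  finally show ?thesis using telescope[of r] per by (simp add: diff_mult_distrib)
qed

section \<open>Closed walks\<close>

text \<open>A closed walk of length r encodes an element U of E_{D,p}(r): its i-th label is the vector of
  i-th base-p digits of U, and its sources are the support values \<phi>_U(0), \<phi>_U(-1), \<phi>_U(-2), ....\<close>

type_synonym 'n edge = "(nat ^ 'n \<Rightarrow> nat) \<times> (nat ^ 'n) \<times> (nat ^ 'n)"

abbreviation edge_label :: "'n edge \<Rightarrow> nat ^ 'n \<Rightarrow> nat" where
  "edge_label e \<equiv> fst e"

abbreviation edge_src :: "'n edge \<Rightarrow> nat ^ 'n" where
  "edge_src e \<equiv> fst (snd e)"

abbreviation edge_tgt :: "'n edge \<Rightarrow> nat ^ 'n" where
  "edge_tgt e \<equiv> snd (snd e)"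

definition is_edge :: "(nat ^ 'n) set \<Rightarrow> nat \<Rightarrow> 'n edge \<Rightarrow> bool" where
  "is_edge D p e \<longleftrightarrow> (\<forall>d\<in>D. edge_label e d < p) \<and> (\<forall>j. 0 < edge_src e $ j) \<and>
     (\<forall>j. p * edge_tgt e $ j = edge_src e $ j + (\<Sum>d\<in>D. edge_label e d * d $ j))"

fun is_walk :: "(nat ^ 'n) set \<Rightarrow> nat \<Rightarrow> nat ^ 'n \<Rightarrow> 'n edge list \<Rightarrow> nat ^ 'n \<Rightarrow> bool" where
  "is_walk D p u [] v \<longleftrightarrow> u = v"
| "is_walk D p u (e # es) v \<longleftrightarrow> is_edge D p e \<and> edge_src e = u \<and> is_walk D p (edge_tgt e) es v"

definition closed_walk :: "(nat ^ 'n) set \<Rightarrow> nat \<Rightarrow> 'n edge list \<Rightarrow> bool" where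
  "closed_walk D p xs \<longleftrightarrow> xs \<noteq> [] \<and> is_walk D p (edge_src (hd xs)) xs (edge_src (hd xs))"

definition walk_weight :: "(nat ^ 'n) set \<Rightarrow> 'n edge list \<Rightarrow> nat" where
  "walk_weight D xs = (\<Sum>e\<leftarrow>xs. \<Sum>d\<in>D. edge_label e d)"

definition walk_element :: "(nat ^ 'n) set \<Rightarrow> nat \<Rightarrow> 'n edge list \<Rightarrow> nat ^ 'n \<Rightarrow> nat" where
  "walk_element D p xs = (\<lambda>d\<in>D. \<Sum>i<length xs. edge_label (xs ! i) d * p ^ i)"

lemma walk_weight_Nil [simp]: "walk_weight D [] = 0"
  by (simp add: walk_weight_def)

lemma walk_weight_Cons [simp]: "walk_weight D (e # es) = (\<Sum>d\<in>D. edge_label e d) + walk_weight D es"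
  by (simp add: walk_weight_def)

lemma walk_weight_append [simp]: "walk_weight D (xs @ ys) = walk_weight D xs + walk_weight D ys"
  by (simp add: walk_weight_def)

lemma walk_weight_conv_nth: "walk_weight D xs = (\<Sum>i<length xs. \<Sum>d\<in>D. edge_label (xs ! i) d)"
  unfolding walk_weight_def sum_list_sum_nth by (simp add: lessThan_atLeast0)

lemma is_walk_append: "is_walk D p u (xs @ ys) v \<longleftrightarrow> (\<exists>m. is_walk D p u xs m \<and> is_walk D p m ys v)"
  by (induction xs arbitrary: u) auto

lemma is_walk_hd: "is_walk D p u xs v \<Longrightarrow> xs \<noteq> [] \<Longrightarrow> edge_src (hd xs) = u"
  by (cases xs) auto

lemma is_walk_nth:
  assumes "is_walk D p u xs v" and "k < length xs"
  shows "is_edge D p (xs ! k) \<and>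
    edge_tgt (xs ! k) = (if Suc k < length xs then edge_src (xs ! Suc k) else v)"
  using assms
proof (induction xs arbitrary: u k)
  case (Cons e es)
  then show ?case by (cases k; cases es) auto
qed simp

lemma is_walk_take_drop:
  assumes "is_walk D p u xs v" and "n < length xs"
  shows "is_walk D p u (take n xs) (edge_src (xs ! n))" and "is_walk D p (edge_src (xs ! n)) (drop n xs) v"
proof -
  obtain m where m: "is_walk D p u (take n xs) m" "is_walk D p m (drop n xs) v"
    using assms(1) is_walk_append[of D p u "take n xs" "drop n xs" v] by auto
  have "m = edge_src (xs ! n)" using is_walk_hd[OF m(2)] assms(2) by (simp add: hd_drop_conv_nth)
  then show "is_walk D p u (take n xs) (edge_src (xs ! n))" "is_walk D p (edge_src (xs ! n)) (drop n xs) v"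
    using m by simp_all
qed

lemma closed_walk_length_ge_1: "closed_walk D p xs \<Longrightarrow> 1 \<le> length xs"
  by (cases xs) (auto simp: closed_walk_def)

lemma closed_walk_nth:
  assumes "closed_walk D p xs" and "i < length xs"
  shows "is_edge D p (xs ! i)" and "edge_tgt (xs ! i) = edge_src (xs ! (Suc i mod length xs))"
proof -
  have walk: "is_walk D p (edge_src (hd xs)) xs (edge_src (hd xs))" and "xs \<noteq> []"
    using assms(1) by (auto simp: closed_walk_def)
  then show "is_edge D p (xs ! i)" using is_walk_nth assms(2) by blast
  have "Suc i mod length xs = (if Suc i < length xs then Suc i else 0)"
    using assms(2) by (metis Suc_lessI mod_less mod_self)
  then show "edge_tgt (xs ! i) = edge_src (xs ! (Suc i mod length xs))"
    using is_walk_nth[OF walk assms(2)] \<open>xs \<noteq> []\<close> by (simp add: hd_conv_nth)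
qed

definition walk_label :: "'n edge list \<Rightarrow> nat \<Rightarrow> nat ^ 'n \<Rightarrow> nat" where
  "walk_label xs i = edge_label (xs ! (i mod length xs))"

definition walk_vertex :: "'n edge list \<Rightarrow> nat \<Rightarrow> nat ^ 'n" where
  "walk_vertex xs i = edge_src (xs ! (i mod length xs))"

lemma walk_label_add_length [simp]: "walk_label xs (i + length xs) = walk_label xs i"
  by (simp add: walk_label_def)

lemma walk_vertex_add_length [simp]: "walk_vertex xs (i + length xs) = walk_vertex xs i"
  by (simp add: walk_vertex_def)

text \<open>Each shift moves the window of digits by r - 1, i.e. by -1 modulo r.\<close>

lemma rotation_index:
  assumes "1 \<le> r"
  shows "(nat (k mod int r) * (r - 1)) mod r = nat ((- k) mod int r)"
proof -
  have "int ((nat (k mod int r) * (r - 1)) mod r) = ((k mod int r) * (int r - 1)) mod int r"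
    using assms by (simp add: zmod_int of_nat_diff)
  also have "\<dots> = (k * (int r - 1)) mod int r" by (simp add: mod_mult_left_eq)
  also have "\<dots> = ((- k) + k * int r) mod int r" by (simp add: algebra_simps)
  also have "\<dots> = (- k) mod int r" by (rule mod_mult_self1)
  finally show ?thesis by (metis nat_int)
qed

context
  fixes D :: "(nat ^ 'n) set" and p :: nat and xs :: "'n edge list"
  assumes closed: "closed_walk D p xs" and p: "2 \<le> p"
begin

private lemma edges: "i < length xs \<Longrightarrow> is_edge D p (xs ! i)"
  using closed_walk_nth(1)[OF closed] by blast

private lemma length_ge_1: "1 \<le> length xs"
  using closed by (rule closed_walk_length_ge_1)

private lemma mod_length_less: "i mod length xs < length xs"
  using closed by (simp add: closed_walk_def)

private lemma edges_mod: "is_edge D p (xs ! (i mod length xs))"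
  using edges mod_length_less by blast

lemma walk_label_less: "d \<in> D \<Longrightarrow> walk_label xs i d < p"
  using edges_mod[of i] by (simp add: walk_label_def is_edge_def)

lemma walk_vertex_pos: "0 < walk_vertex xs i $ j"
  using edges_mod[of i] by (simp add: walk_vertex_def is_edge_def)

lemma walk_vertex_Suc:
  "p * walk_vertex xs (Suc i) $ j = walk_vertex xs i $ j + (\<Sum>d\<in>D. walk_label xs i d * d $ j)"
proof -
  define k where "k = i mod length xs"
  have k: "k < length xs" using mod_length_less by (simp add: k_def)
  have "walk_vertex xs (Suc i) = edge_tgt (xs ! k)"
    using closed_walk_nth(2)[OF closed k] by (simp add: walk_vertex_def k_def mod_Suc_eq)
  then show ?thesis using edges[OF k] by (simp add: is_edge_def walk_vertex_def walk_label_def k_def)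
qed

lemma walk_element_eq_window_num:
  "d \<in> D \<Longrightarrow> walk_element D p xs d = window_num p (length xs) (\<lambda>i. walk_label xs i d) 0"
  by (simp add: walk_element_def window_num_def walk_label_def)

lemma sum_window_num_walk_label:
  "(\<Sum>d\<in>D. d $ j * window_num p (length xs) (\<lambda>i. walk_label xs i d) s)
     = (p ^ length xs - 1) * walk_vertex xs s $ j"
  by (rule sum_window_num_eq) (simp_all add: walk_vertex_Suc)

lemma walk_element_in_E: "walk_element D p xs \<in> E D p (length xs)"
proof -
  have "walk_element D p xs d \<le> p ^ length xs - 1" if "d \<in> D" for d
    using window_num_less[of "\<lambda>i. walk_label xs i d" p "length xs" 0] walk_label_less[OF that]
      walk_element_eq_window_num[OF that] by simp
  then have "walk_element D p xs \<in> D \<rightarrow>\<^sub>E {0..p ^ length xs - 1}"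
    by (auto simp: walk_element_def)
  moreover have "wsum D (walk_element D p xs) $ j = (p ^ length xs - 1) * walk_vertex xs 0 $ j" for j
    using sum_window_num_walk_label[of j 0]
    by (simp add: wsum_def walk_element_eq_window_num mult.commute cong: sum.cong)
  moreover have "0 < (p ^ length xs - 1) * walk_vertex xs 0 $ j" for j
    using power_ge_two[OF p length_ge_1] walk_vertex_pos by simp
  ultimately show ?thesis by (simp add: E_def)
qed

lemma walk_element_digit:
  "i < length xs \<Longrightarrow> d \<in> D \<Longrightarrow> walk_element D p xs d div p ^ i mod p = edge_label (xs ! i) d"
  using edges sum_digits_nth_digit[of "length xs" "\<lambda>i. edge_label (xs ! i) d" p i]
  by (simp add: walk_element_def is_edge_def)

lemma sU_walk_element: "sU p D (walk_element D p xs) = walk_weight D xs"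
proof -
  have "digsum p (walk_element D p xs d) = (\<Sum>i<length xs. edge_label (xs ! i) d)" if "d \<in> D" for d
    using that p edges by (simp add: walk_element_def digsum_sum_digits is_edge_def)
  then have "sU p D (walk_element D p xs) = (\<Sum>d\<in>D. \<Sum>i<length xs. edge_label (xs ! i) d)"
    by (simp add: sU_def)
  then show ?thesis by (simp add: walk_weight_conv_nth sum.swap[of _ D])
qed

lemma supp_walk_element:
  "supp D p (length xs) (walk_element D p xs) k = edge_src (xs ! nat ((- k) mod int (length xs)))"
proof -
  define t where "t = nat (k mod int (length xs))"
  have "supp D p (length xs) (walk_element D p xs) k $ j = walk_vertex xs (t * (length xs - 1)) $ j" for j
  proof -
    have "(shift p (length xs) ^^ t) (walk_element D p xs d)
        = window_num p (length xs) (\<lambda>i. walk_label xs i d) (t * (length xs - 1))" if "d \<in> D" for d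
      using funpow_shift_window_num[of "\<lambda>i. walk_label xs i d" "length xs" p t 0]
        walk_label_less[OF that] p length_ge_1 walk_element_eq_window_num[OF that] by simp
    then show ?thesis
      using sum_window_num_walk_label[of j "t * (length xs - 1)"] power_ge_two[OF p length_ge_1]
      by (simp add: supp_def t_def cong: sum.cong)
  qed
  then show ?thesis
    using rotation_index[OF length_ge_1, of k] by (simp add: vec_eq_iff walk_vertex_def t_def)
qed

lemma edge_src_eq_supp:
  "i < length xs \<Longrightarrow> edge_src (xs ! i) = supp D p (length xs) (walk_element D p xs) (- int i)"
  by (simp add: supp_walk_element)

lemma edge_tgt_eq_supp:
  "i < length xs \<Longrightarrow> edge_tgt (xs ! i) = supp D p (length xs) (walk_element D p xs) (- int i - 1)"
  using closed_walk_nth(2)[OF closed, of i] by (simp add: supp_walk_element nat_mod_as_int)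

end

lemma closed_walk_of_edges:
  assumes "1 \<le> r" and "a r = a 0" and "\<And>i. i < r \<Longrightarrow> is_edge D p (w i, a i, a (Suc i))"
  shows "closed_walk D p (map (\<lambda>i. (w i, a i, a (Suc i))) [0..<r])"
proof -
  have "is_walk D p (a 0) (map (\<lambda>i. (w i, a i, a (Suc i))) [0..<k]) (a k)" if "k \<le> r" for k
    using that by (induction k) (auto simp: is_walk_append assms(3))
  from this[of r] show ?thesis using assms(1,2) by (auto simp: closed_walk_def hd_map)
qed

text \<open>Since p^r - 1 is coprime to p, divisibility of the weighted digit windows by p^r - 1 propagates
  from each window to the next; the quotients are the vertices of a closed walk.\<close>

lemma E_imp_vertex_chain:
  assumes U: "U \<in> E D p r" and r: "1 \<le> r" and p: "2 \<le> p"
  defines "w \<equiv> \<lambda>i. \<lambda>d\<in>D. U d div p ^ (i mod r) mod p"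
  shows "\<exists>a. a r = a 0 \<and> (\<forall>i j. 0 < a i $ j) \<and>
           (\<forall>i j. p * a (Suc i) $ j = a i $ j + (\<Sum>d\<in>D. w i d * d $ j))"
proof -
  have per: "\<forall>i d. w (i + r) d = w i d" by (simp add: w_def)
  have pr: "2 \<le> p ^ r" using p r by (rule power_ge_two)
  define S where "S s j = (\<Sum>d\<in>D. d $ j * window_num p r (\<lambda>i. w i d) s)" for s j
  define X where "X s j = (\<Sum>d\<in>D. d $ j * w s d)" for s j
  have step: "p * S (Suc s) j = S s j + (p ^ r - 1) * X s j" for s j
    using sum_window_num_Suc[OF per] p by (simp add: S_def X_def)
  have S0: "S 0 j = wsum D U $ j" for j
  proof -
    have "window_num p r (\<lambda>i. w i d) 0 = U d" if "d \<in> D" for d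
      using U that pr p window_num_nth_digits[of "U d" p r] by (auto simp: E_def PiE_def Pi_def w_def)
    then show ?thesis by (simp add: S_def wsum_def mult.commute cong: sum.cong)
  qed
  have coprime: "coprime (p ^ r - 1) p"
    using coprime_diff_one_left_nat[of "p ^ r"] pr r p by (simp add: coprime_power_right_iff)
  have dvd: "(p ^ r - 1) dvd S s j" for s j
  proof (induction s)
    case 0
    then show ?case using U S0 by (simp add: E_def dvd_eq_mod_eq_0)
  next
    case (Suc s)
    then have "(p ^ r - 1) dvd p * S (Suc s) j" using step by simp
    then show ?case using coprime by (simp add: coprime_dvd_mult_right_iff)
  qed
  define a where "a s = (\<chi> j. S s j div (p ^ r - 1))" for s
  have Sa: "S s j = (p ^ r - 1) * a s $ j" for s j using dvd by (simp add: a_def)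
  have chain: "p * a (Suc i) $ j = a i $ j + X i j" for i j
  proof -
    have "(p ^ r - 1) * (p * a (Suc i) $ j) = (p ^ r - 1) * (a i $ j + X i j)"
      using step[of i j] unfolding Sa by (simp add: distrib_left mult.left_commute)
    then show ?thesis using pr by simp
  qed
  have pos: "0 < a s $ j" for s j
  proof (induction s)
    case 0
    have "0 < S 0 j" using U S0[of j] by (simp add: E_def)
    then show ?case using Sa[of 0 j] by (metis mult_0_right neq0_conv)
  next
    case (Suc s)
    then show ?case using chain[of s j] by (metis add_gr_0 mult_0_right neq0_conv)
  qed
  have "window_num p r (\<lambda>i. w i d) (0 + r) = window_num p r (\<lambda>i. w i d) 0" for d
    using per by (intro window_num_periodic) simp
  then have "a r = a 0" by (simp add: a_def S_def)
  then show ?thesis using pos chain by (auto simp: X_def mult.commute)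
qed

lemma E_imp_closed_walk:
  assumes U: "U \<in> E D p r" and r: "1 \<le> r" and p: "2 \<le> p"
  shows "\<exists>xs. closed_walk D p xs \<and> length xs = r \<and> walk_element D p xs = U \<and>
           (\<forall>i<r. edge_label (xs ! i) = (\<lambda>d\<in>D. U d div p ^ i mod p))"
proof -
  define w where "w = (\<lambda>i. \<lambda>d\<in>D. U d div p ^ (i mod r) mod p)"
  obtain a where a: "a r = a 0" "\<And>i j. 0 < a i $ j"
    "\<And>i j. p * a (Suc i) $ j = a i $ j + (\<Sum>d\<in>D. w i d * d $ j)"
    using E_imp_vertex_chain[OF assms] unfolding w_def by blast
  define xs where "xs = map (\<lambda>i. (w i, a i, a (Suc i))) [0..<r]"
  have "is_edge D p (w i, a i, a (Suc i))" for i
    using a(2,3) p by (auto simp: is_edge_def w_def)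
  then have "closed_walk D p xs" unfolding xs_def by (intro closed_walk_of_edges[OF r a(1)])
  moreover have labels: "\<forall>i<r. edge_label (xs ! i) = (\<lambda>d\<in>D. U d div p ^ i mod p)"
    by (simp add: xs_def w_def)
  moreover have "walk_element D p xs = U"
  proof (rule ext)
    fix d
    show "walk_element D p xs d = U d"
    proof (cases "d \<in> D")
      case True
      have "U d < p ^ r" using U True power_ge_two[OF p r]
        by (auto simp: E_def PiE_def Pi_def less_Suc_eq_le[symmetric])
      then show ?thesis using True labels p sum_nth_digits[of "U d" p r]
        by (simp add: walk_element_def xs_def)
    next
      case False
      then show ?thesis using U by (auto simp: walk_element_def E_def PiE_def extensional_def)
    qed
  qed
  ultimately show ?thesis by (auto simp: xs_def)
qed

section \<open>Minimal closed walks\<close>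

text \<open>min_ratio D p is the paper's (p - 1) \<delta>_p(D).\<close>

definition min_ratio :: "(nat ^ 'n) set \<Rightarrow> nat \<Rightarrow> real" where
  "min_ratio D p = Inf {real (sU p D U) / real r | r U. r \<ge> 1 \<and> U \<in> E D p r}"

lemma min_ratio_le: "U \<in> E D p r \<Longrightarrow> 1 \<le> r \<Longrightarrow> min_ratio D p \<le> real (sU p D U) / real r"
  unfolding min_ratio_def by (rule cInf_lower) (auto intro: bdd_belowI[where m = 0])

lemma minimal_iff_min_ratio:
  "2 \<le> p \<Longrightarrow> minimal D p r U \<longleftrightarrow> U \<in> E D p r \<and> real (sU p D U) = real r * min_ratio D p"
  by (auto simp: minimal_def delta_def min_ratio_def)

definition minimal_walk :: "(nat ^ 'n) set \<Rightarrow> nat \<Rightarrow> 'n edge list \<Rightarrow> bool" where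
  "minimal_walk D p xs \<longleftrightarrow>
     closed_walk D p xs \<and> real (walk_weight D xs) = real (length xs) * min_ratio D p"

lemma closed_walk_weight_ge:
  assumes "closed_walk D p xs" and "2 \<le> p"
  shows "real (length xs) * min_ratio D p \<le> real (walk_weight D xs)"
proof -
  have len: "0 < real (length xs)" using assms(1) by (simp add: closed_walk_def)
  have "min_ratio D p \<le> real (walk_weight D xs) / real (length xs)"
    using min_ratio_le[OF walk_element_in_E[OF assms] closed_walk_length_ge_1[OF assms(1)]]
      sU_walk_element[OF assms] by simp
  then show ?thesis using len by (simp add: pos_le_divide_eq mult.commute)
qed

lemma minimal_walk_element_iff:
  assumes "closed_walk D p xs" and "2 \<le> p"
  shows "minimal D p (length xs) (walk_element D p xs) \<longleftrightarrow> minimal_walk D p xs"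
  using assms by (simp add: minimal_iff_min_ratio walk_element_in_E sU_walk_element minimal_walk_def)

lemma closed_walkI: "is_walk D p u xs u \<Longrightarrow> xs \<noteq> [] \<Longrightarrow> closed_walk D p xs"
  using is_walk_hd[of D p u xs u] by (simp add: closed_walk_def)

lemma is_walk_target_unique: "is_walk D p u xs v \<Longrightarrow> is_walk D p u xs v' \<Longrightarrow> v = v'"
  by (induction xs arbitrary: u) auto

text \<open>Cutting a closed subwalk out of a minimal closed walk leaves a minimal closed walk, since both
  pieces have weight at least min_ratio times their length.\<close>

lemma minimal_walk_remove_cycle:
  assumes min: "minimal_walk D p (P @ Q @ R)" and Q: "is_walk D p u Q u" "Q \<noteq> []"
    and PR: "P @ R \<noteq> []" and p: "2 \<le> p"
  shows "minimal_walk D p (P @ R)"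
proof -
  define v where "v = edge_src (hd (P @ Q @ R))"
  obtain m1 m2 where P: "is_walk D p v P m1" and Q': "is_walk D p m1 Q m2" and R: "is_walk D p m2 R v"
    using min by (auto simp: minimal_walk_def closed_walk_def is_walk_append v_def)
  have "m1 = u" using is_walk_hd[OF Q'] is_walk_hd[OF Q(1)] Q(2) by simp
  then have "m2 = u" using is_walk_target_unique[OF _ Q(1)] Q' by blast
  then have closed_PR: "closed_walk D p (P @ R)"
    using P R \<open>m1 = u\<close> PR by (intro closed_walkI[of D p v]) (auto simp: is_walk_append)
  have closed_Q: "closed_walk D p Q" using Q by (rule closed_walkI)
  have "real (walk_weight D (P @ R)) + real (walk_weight D Q)
      = (real (length (P @ R)) + real (length Q)) * min_ratio D p"
    using min by (simp add: minimal_walk_def algebra_simps)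
  then show ?thesis
    using closed_walk_weight_ge[OF closed_PR p] closed_walk_weight_ge[OF closed_Q p] closed_PR
    by (simp add: minimal_walk_def algebra_simps)
qed

lemma minimal_walk_simple:
  assumes "minimal_walk D p xs" and "2 \<le> p"
  shows "\<exists>C. minimal_walk D p C \<and> hd C = hd xs \<and> distinct (map (\<lambda>e. edge_src e) C)"
  using assms(1)
proof (induction "length xs" arbitrary: xs rule: less_induct)
  case less
  show ?case
  proof (cases "distinct (map (\<lambda>e. edge_src e) xs)")
    case False
    then obtain j k where jk: "j < k" "k < length xs" "edge_src (xs ! j) = edge_src (xs ! k)"
      by (auto simp: distinct_conv_nth nat_neq_iff)
    define u where "u = edge_src (hd xs)"
    have ne: "xs \<noteq> []" and walk: "is_walk D p u xs u"
      using less.prems by (auto simp: minimal_walk_def closed_walk_def u_def)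
    obtain P Q R where split: "xs = P @ Q @ R" and "P \<noteq> []" and "Q \<noteq> []"
      and Q: "is_walk D p (edge_src (xs ! k)) Q (edge_src (xs ! k))"
    proof (cases "j = 0")
      case True
      then have "edge_src (xs ! k) = u" using jk(3) ne by (simp add: u_def hd_conv_nth)
      show ?thesis
      proof (rule that[of "take k xs" "drop k xs" "[]"])
        show "is_walk D p (edge_src (xs ! k)) (drop k xs) (edge_src (xs ! k))"
          using is_walk_take_drop(2)[OF walk jk(2)] \<open>edge_src (xs ! k) = u\<close> by simp
      qed (use jk True in auto)
    next
      case False
      show ?thesis
      proof (rule that[of "take j xs" "drop j (take k xs)" "drop k xs"])
        have "take k xs = take j xs @ drop j (take k xs)" using jk(1)
          by (metis append_take_drop_id min.strict_order_iff take_take)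
        then show "xs = take j xs @ drop j (take k xs) @ drop k xs"
          by (metis append.assoc append_take_drop_id)
        show "is_walk D p (edge_src (xs ! k)) (drop j (take k xs)) (edge_src (xs ! k))"
          using is_walk_take_drop(2)[OF is_walk_take_drop(1)[OF walk jk(2)], of j] jk by simp
      qed (use False jk in auto)
    qed
    have min: "minimal_walk D p (P @ R)"
      using minimal_walk_remove_cycle[OF _ Q \<open>Q \<noteq> []\<close> _ assms(2)] less.prems split \<open>P \<noteq> []\<close> by simp
    have "length (P @ R) < length xs" using split \<open>Q \<noteq> []\<close> by simp
    then show ?thesis using less.hyps[OF _ min] split \<open>P \<noteq> []\<close> by simp
  qed (use less.prems in blast)
qed

lemma minimal_walk_rotate:
  assumes "minimal_walk D p xs" and "i < length xs"
  shows "minimal_walk D p (drop i xs @ take i xs)" and "hd (drop i xs @ take i xs) = xs ! i"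
proof -
  define u where "u = edge_src (hd xs)"
  have walk: "is_walk D p u xs u" using assms(1) by (simp add: minimal_walk_def closed_walk_def u_def)
  have "is_walk D p (edge_src (xs ! i)) (drop i xs @ take i xs) (edge_src (xs ! i))"
    using is_walk_take_drop[OF walk assms(2)] by (auto simp: is_walk_append)
  then have "closed_walk D p (drop i xs @ take i xs)" using assms(2) by (intro closed_walkI) auto
  moreover have "walk_weight D (drop i xs @ take i xs) = walk_weight D xs"
    by (metis add.commute append_take_drop_id walk_weight_append)
  ultimately show "minimal_walk D p (drop i xs @ take i xs)"
    using assms by (simp add: minimal_walk_def)
  show "hd (drop i xs @ take i xs) = xs ! i" using assms(2) by (simp add: hd_drop_conv_nth)
qed

lemma walk_weight_concat: "walk_weight D (concat xss) = (\<Sum>xs\<leftarrow>xss. walk_weight D xs)"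
  by (induction xss) simp_all

lemma sum_list_map_rev_upt: "(\<Sum>i\<leftarrow>rev [0..<n]. f i) = (\<Sum>i<n. f i)"
  by (simp add: sum_list.rev interv_sum_list_conv_sum_set_nat atLeast0LessThan flip: rev_map)

lemma is_walk_concat_rev:
  assumes "\<And>i. i < k \<Longrightarrow> is_walk D p (v (Suc i)) (P i) (v i)"
  shows "is_walk D p (v k) (concat (map P (rev [0..<k]))) (v 0)"
  using assms by (induction k) (auto simp: is_walk_append)

lemma closed_walk_tl: "closed_walk D p C \<Longrightarrow> is_walk D p (edge_tgt (hd C)) (tl C) (edge_src (hd C))"
  by (cases C) (auto simp: closed_walk_def)

lemma closed_walk_hd_edge: "closed_walk D p C \<Longrightarrow> is_edge D p (hd C)"
  by (cases C) (auto simp: closed_walk_def)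

lemma cycle_weight_ge:
  assumes "is_walk D p u xs u" and "2 \<le> p"
  shows "real (length xs) * min_ratio D p \<le> real (walk_weight D xs)"
  using closed_walk_weight_ge[OF closed_walkI[OF assms(1)] assms(2)] by (cases "xs = []") simp_all

text \<open>Conversely, a closed walk each of whose edges lies on a minimal closed walk is minimal: the
  remainders of these walks, concatenated in reverse order, form a closed walk back around xs,
  and together with xs they have exactly the weight of the minimal walks.\<close>

lemma minimal_walkI_edges:
  assumes closed: "closed_walk D p xs" and p: "2 \<le> p"
    and edges: "\<forall>i<length xs. \<exists>C. minimal_walk D p C \<and> hd C = xs ! i"
  shows "minimal_walk D p xs"
proof -
  define n where "n = length xs"
  obtain C where C: "\<And>i. i < n \<Longrightarrow> minimal_walk D p (C i) \<and> hd (C i) = xs ! i"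
    using edges by (metis n_def)
  have C_closed: "closed_walk D p (C i)" if "i < n" for i using C[OF that] by (simp add: minimal_walk_def)
  define R where "R = concat (map (\<lambda>i. tl (C i)) (rev [0..<n]))"
  have "is_walk D p (edge_src (xs ! (n mod n))) R (edge_src (xs ! (0 mod n)))"
    unfolding R_def
  proof (rule is_walk_concat_rev)
    fix i assume i: "i < n"
    show "is_walk D p (edge_src (xs ! (Suc i mod n))) (tl (C i)) (edge_src (xs ! (i mod n)))"
      using closed_walk_tl[OF C_closed[OF i]] C[OF i] closed_walk_nth(2)[OF closed, of i] i
      by (simp add: n_def)
  qed
  then have R_ge: "real (length R) * min_ratio D p \<le> real (walk_weight D R)"
    by (intro cycle_weight_ge[OF _ p]) simp
  have weights: "walk_weight D R + walk_weight D xs = (\<Sum>i<n. walk_weight D (C i))"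
  proof -
    have "walk_weight D (C i) = (\<Sum>d\<in>D. edge_label (xs ! i) d) + walk_weight D (tl (C i))" if "i < n" for i
      using C[OF that] C_closed[OF that] by (cases "C i") (auto simp: closed_walk_def)
    then show ?thesis
      by (simp add: R_def walk_weight_concat sum_list_map_rev_upt walk_weight_conv_nth[of D xs] n_def
          sum.distrib)
  qed
  have lengths: "length R + n = (\<Sum>i<n. length (C i))"
  proof -
    have "(\<Sum>i<n. length (C i)) = (\<Sum>i<n. length (tl (C i)) + 1)"
      using C_closed by (intro sum.cong) (auto simp: closed_walk_def)
    also have "\<dots> = (\<Sum>i<n. length (tl (C i))) + n" by (simp only: sum.distrib) simp
    finally show ?thesis by (simp add: R_def length_concat sum_list_map_rev_upt)
  qed
  have "real (walk_weight D R) + real (walk_weight D xs) = (\<Sum>i<n. real (walk_weight D (C i)))"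
    using weights by (metis of_nat_add of_nat_sum)
  also have "\<dots> = (\<Sum>i<n. real (length (C i)) * min_ratio D p)"
    using C by (simp add: minimal_walk_def)
  also have "\<dots> = (real (length R) + real n) * min_ratio D p"
    using lengths by (simp flip: sum_distrib_right of_nat_sum of_nat_add)
  finally have "real (walk_weight D xs) \<le> real n * min_ratio D p" using R_ge by (simp add: algebra_simps)
  then show ?thesis
    using closed_walk_weight_ge[OF closed p] closed by (simp add: minimal_walk_def n_def)
qed

section \<open>Minimal walks and the sets V\<close>

lemma irreducible_walk_element:
  assumes closed: "closed_walk D p xs" and p: "2 \<le> p" and distinct: "distinct (map (\<lambda>e. edge_src e) xs)"
  shows "irreducible_el D p (length xs) (walk_element D p xs)"
  unfolding irreducible_el_def
proof (rule inj_onI)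
  fix k1 k2 assume k: "k1 \<in> {0..<int (length xs)}" "k2 \<in> {0..<int (length xs)}"
    and eq: "supp D p (length xs) (walk_element D p xs) k1 = supp D p (length xs) (walk_element D p xs) k2"
  have n: "0 < length xs" using closed by (simp add: closed_walk_def)
  have "nat ((- k1) mod int (length xs)) = nat ((- k2) mod int (length xs))"
    using eq nth_eq_iff_index_eq[OF distinct] n
    by (simp add: supp_walk_element[OF closed p] nat_less_iff)
  then have "(- k1) mod int (length xs) = (- k2) mod int (length xs)"
    using n by (subst (asm) eq_nat_nat_iff) auto
  then have "(- (- k1)) mod int (length xs) = (- (- k2)) mod int (length xs)" by (rule mod_minus_cong)
  then show "k1 = k2" using k by simp
qed

lemma V_subset_extensional: "V D p e e' \<subseteq> extensional D"
  by (auto simp: V_def psi_def)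

lemma in_V_if_minimal_walk:
  assumes min: "minimal_walk D p xs" and p: "2 \<le> p"
  shows "restrict (edge_label (hd xs)) D \<in> V D p (edge_tgt (hd xs)) (edge_src (hd xs))"
proof -
  obtain C where C: "minimal_walk D p C" "hd C = hd xs" and distinct: "distinct (map (\<lambda>e. edge_src e) C)"
    using minimal_walk_simple[OF min p] by blast
  have closed: "closed_walk D p C" using C(1) by (simp add: minimal_walk_def)
  have n: "0 < length C" and hd: "hd C = C ! 0" using closed by (auto simp: closed_walk_def hd_conv_nth)
  have "(length C, walk_element D p C) \<in> MI D p"
    using closed_walk_length_ge_1[OF closed] walk_element_in_E[OF closed p] C(1)
      minimal_walk_element_iff[OF closed p] irreducible_walk_element[OF closed p distinct]
    by (simp add: MI_def)
  moreover have "psi D p (walk_element D p C) = restrict (edge_label (hd C)) D"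
    using walk_element_digit[OF closed p n] by (auto simp: psi_def hd intro!: restrict_ext)
  ultimately show ?thesis
    using edge_src_eq_supp[OF closed p n] edge_tgt_eq_supp[OF closed p n] C(2) hd
    by (force simp: V_def)
qed

lemma minimal_walk_if_in_V:
  assumes x: "x \<in> V D p e e'" and p: "2 \<le> p"
  shows "\<exists>C. minimal_walk D p C \<and> hd C = (x, e', e)"
proof -
  obtain r U where x_psi: "x = psi D p U" and MI: "(r, U) \<in> MI D p"
    and e: "supp D p r U (- 1) = e" and e': "supp D p r U 0 = e'"
    using x by (auto simp: V_def)
  have r: "1 \<le> r" and U: "U \<in> E D p r" and min: "minimal D p r U" using MI by (auto simp: MI_def)
  obtain xs where closed: "closed_walk D p xs" and len: "length xs = r" and xs_U: "walk_element D p xs = U"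
    and labels: "\<forall>i<r. edge_label (xs ! i) = (\<lambda>d\<in>D. U d div p ^ i mod p)"
    using E_imp_closed_walk[OF U r p] by blast
  have n: "0 < length xs" using len r by simp
  have "edge_label (xs ! 0) = x" using labels r by (simp add: x_psi psi_def)
  moreover have "edge_src (xs ! 0) = e'" using edge_src_eq_supp[OF closed p n] e' len xs_U by simp
  moreover have "edge_tgt (xs ! 0) = e" using edge_tgt_eq_supp[OF closed p n] e len xs_U by simp
  moreover have "minimal_walk D p xs" using min minimal_walk_element_iff[OF closed p] len xs_U by simp
  ultimately show ?thesis using n by (metis hd_conv_nth length_greater_0_conv prod.collapse)
qed

section \<open>The digit map\<close>

lemma periodic_minus_mod:
  fixes \<phi> :: "int \<Rightarrow> 'a"
  assumes per: "\<forall>k. \<phi> (k + int m) = \<phi> k"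
  shows "\<phi> (- ((- k) mod int m)) = \<phi> k"
proof -
  have nonneg: "\<phi> (k + int m * int n) = \<phi> k" for k n
  proof (induction n arbitrary: k)
    case (Suc n)
    have "\<phi> (k + int m * int (Suc n)) = \<phi> ((k + int m * int n) + int m)" by (simp add: algebra_simps)
    then show ?case using per Suc by simp
  qed simp
  have "\<phi> (k + int m * q) = \<phi> k" for q
  proof (cases "q \<ge> 0")
    case True
    then show ?thesis using nonneg[of k "nat q"] by simp
  next
    case False
    then show ?thesis using nonneg[of "k + int m * q" "nat (- q)"] by (simp add: algebra_simps)
  qed
  moreover have "- ((- k) mod int m) = k + int m * ((- k) div int m)"
    using mult_div_mod_eq[of "int m" "- k"] by linarith
  ultimately show ?thesis by simp
qed

lemma Bmap_Mset_in_PiE: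
  assumes U: "U \<in> Mset D p m \<phi>" and m: "1 \<le> m" and p: "2 \<le> p"
  shows "Bmap D p m U \<in> (\<Pi>\<^sub>E i\<in>{..<m}. V D p (\<phi> (- int i - 1)) (\<phi> (- int i)))"
proof -
  have UE: "U \<in> E D p m" and min: "minimal D p m U" and supp: "supp D p m U = \<phi>"
    using U by (auto simp: Mset_def)
  obtain xs where closed: "closed_walk D p xs" and len: "length xs = m" and xs_U: "walk_element D p xs = U"
    and labels: "\<forall>i<m. edge_label (xs ! i) = (\<lambda>d\<in>D. U d div p ^ i mod p)"
    using E_imp_closed_walk[OF UE m p] by blast
  have min_xs: "minimal_walk D p xs" using min minimal_walk_element_iff[OF closed p] len xs_U by simp
  have "Bmap D p m U i \<in> V D p (\<phi> (- int i - 1)) (\<phi> (- int i))" if i: "i < m" for i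
  proof -
    have "restrict (edge_label (xs ! i)) D \<in> V D p (edge_tgt (xs ! i)) (edge_src (xs ! i))"
      using in_V_if_minimal_walk[OF minimal_walk_rotate(1)[OF min_xs] p] minimal_walk_rotate(2)[OF min_xs]
        i len by simp
    then show ?thesis
      using edge_src_eq_supp[OF closed p] edge_tgt_eq_supp[OF closed p] labels i len xs_U supp
      by (simp add: Bmap_def)
  qed
  then show ?thesis by (auto simp: Bmap_def)
qed

lemma Bmap_Mset_onto_PiE:
  assumes v: "v \<in> (\<Pi>\<^sub>E i\<in>{..<m}. V D p (\<phi> (- int i - 1)) (\<phi> (- int i)))"
    and m: "1 \<le> m" and p: "2 \<le> p" and per: "\<forall>k. \<phi> (k + int m) = \<phi> k"
  shows "\<exists>U\<in>Mset D p m \<phi>. Bmap D p m U = v"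
proof -
  define a where "a i = \<phi> (- int i)" for i
  define xs where "xs = map (\<lambda>i. (v i, a i, a (Suc i))) [0..<m]"
  have a_Suc: "a (Suc i) = \<phi> (- int i - 1)" for i
    unfolding a_def by (rule arg_cong[where f = \<phi>]) simp
  have on_minimal_walk: "\<exists>C. minimal_walk D p C \<and> hd C = (v i, a i, a (Suc i))" if "i < m" for i
  proof -
    have "v i \<in> V D p (\<phi> (- int i - 1)) (\<phi> (- int i))" using v that by auto
    from minimal_walk_if_in_V[OF this p] show ?thesis unfolding a_Suc unfolding a_def .
  qed
  have "is_edge D p (v i, a i, a (Suc i))" if "i < m" for i
    using on_minimal_walk[OF that] closed_walk_hd_edge by (force simp: minimal_walk_def)
  moreover have "a m = a 0" using per[rule_format, of "- int m"] by (simp add: a_def)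
  ultimately have closed: "closed_walk D p xs" unfolding xs_def by (intro closed_walk_of_edges[OF m])
  have len: "length xs = m" by (simp add: xs_def)
  have "minimal_walk D p xs"
    using minimal_walkI_edges[OF closed p] on_minimal_walk len by (simp add: xs_def)
  then have min: "minimal D p m (walk_element D p xs)"
    using minimal_walk_element_iff[OF closed p] len by simp
  have "supp D p m (walk_element D p xs) k = \<phi> k" for k
  proof -
    have "nat ((- k) mod int m) < m" using m by (simp add: nat_less_iff)
    then show ?thesis
      using supp_walk_element[OF closed p, of k] periodic_minus_mod[OF per, of k] len m
      by (simp add: xs_def a_def)
  qed
  then have "walk_element D p xs \<in> Mset D p m \<phi>"
    using walk_element_in_E[OF closed p] min len by (auto simp: Mset_def)
  moreover have "Bmap D p m (walk_element D p xs) = v"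
  proof
    fix i
    show "Bmap D p m (walk_element D p xs) i = v i"
    proof (cases "i < m")
      case True
      then have "v i \<in> extensional D" using v V_subset_extensional by blast
      then show ?thesis
        using True walk_element_digit[OF closed p] len by (auto simp: Bmap_def xs_def extensional_def)
    next
      case False
      then show ?thesis using v by (auto simp: Bmap_def PiE_def extensional_def)
    qed
  qed
  ultimately show ?thesis by blast
qed

lemma inj_on_Bmap:
  assumes "2 \<le> p"
  shows "inj_on (Bmap D p m) (Mset D p m \<phi>)"
proof (rule inj_onI)
  fix U1 U2 assume U1: "U1 \<in> Mset D p m \<phi>" and U2: "U2 \<in> Mset D p m \<phi>"
    and eq: "Bmap D p m U1 = Bmap D p m U2"
  have bounded: "U1 \<in> D \<rightarrow>\<^sub>E {0..p ^ m - 1}" "U2 \<in> D \<rightarrow>\<^sub>E {0..p ^ m - 1}"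
    using U1 U2 by (auto simp: Mset_def E_def)
  have "U1 d = U2 d" if d: "d \<in> D" for d
  proof (rule nth_digits_eq_imp_eq)
    have "0 < p ^ m" using assms by simp
    moreover have "U1 d \<le> p ^ m - 1" "U2 d \<le> p ^ m - 1" using bounded d by auto
    ultimately show "U1 d < p ^ m" "U2 d < p ^ m" by arith+
    show "U1 d div p ^ i mod p = U2 d div p ^ i mod p" if "i < m" for i
      using fun_cong[OF fun_cong[OF eq, of i], of d] that d by (simp add: Bmap_def)
  qed (use assms in simp)
  then show "U1 = U2" by (rule PiE_ext[OF bounded])
qed

theorem proposition2p18:
  fixes D :: "(nat^'n) set" and p m :: nat and \<phi> :: "int \<Rightarrow> nat^'n"
  assumes "finite D"
    and "\<forall>j. \<exists>d\<in>D. d $ j \<noteq> 0"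
    and "prime p" and "m \<ge> 1"
    and "\<forall>k. \<phi> (k + int m) = \<phi> k"
    and "range \<phi> \<subseteq> Sigma_p D p"
  shows "(Mset D p m \<phi> = {} \<longleftrightarrow> (\<exists>i<m. V D p (\<phi> (- int i - 1)) (\<phi> (- int i)) = {}))
    \<and> ((\<forall>i<m. V D p (\<phi> (- int i - 1)) (\<phi> (- int i)) \<noteq> {}) \<longrightarrow>
        bij_betw (Bmap D p m) (Mset D p m \<phi>)
          (\<Pi>\<^sub>E i\<in>{..<m}. V D p (\<phi> (- int i - 1)) (\<phi> (- int i))))"
proof -
  have p: "2 \<le> p" using assms(3) by (rule prime_ge_2_nat)
  have image: "Bmap D p m ` Mset D p m \<phi> = (\<Pi>\<^sub>E i\<in>{..<m}. V D p (\<phi> (- int i - 1)) (\<phi> (- int i)))"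
  proof
    show "Bmap D p m ` Mset D p m \<phi> \<subseteq> (\<Pi>\<^sub>E i\<in>{..<m}. V D p (\<phi> (- int i - 1)) (\<phi> (- int i)))"
      using Bmap_Mset_in_PiE[OF _ assms(4) p] by blast
    show "(\<Pi>\<^sub>E i\<in>{..<m}. V D p (\<phi> (- int i - 1)) (\<phi> (- int i))) \<subseteq> Bmap D p m ` Mset D p m \<phi>"
      using Bmap_Mset_onto_PiE[OF _ assms(4) p assms(5)] by blast
  qed
  have "Mset D p m \<phi> = {} \<longleftrightarrow> Bmap D p m ` Mset D p m \<phi> = {}" by simp
  also have "\<dots> \<longleftrightarrow> (\<exists>i<m. V D p (\<phi> (- int i - 1)) (\<phi> (- int i)) = {})"
    unfolding image PiE_eq_empty_iff by auto
  finally show ?thesis using image by (simp add: bij_betw_def inj_on_Bmap[OF p])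
qed

end
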